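(* Let $r,K,\mu$ satisfy Assumption 1 (in particular $\mu<1-K$). Then $$m^*\le\frac{\frac{\mu K}{r}(1-\mu)}{1-\mu-K\left(1-\frac{2\mu}{r}\right)}.$$
   Context: Assumption 1: $r\in(1,\infty)$, $\mu\in\left(0,\min\left(\frac r2,1-\frac1r,1-K,K\right)\right)$, $K\in\left(0,\min\left(1,\frac{r}{r-1}\left(1-\frac{\mu}{1-\mu}\right)\right)\right)$. $f_w(w,m):=w(1-(w+m))+\mu(m-w)$, $f_m(w,m):=rm\left(1-\frac{w+m}{K}\right)+\mu(w-m)$; $(w^*,m^* )$ is the unique solution in $(0,1)\times(0,K)$ of $f_w=f_m=0$. *)

theory Defs
  imports Complex_Main
begin

definition f_w :: "real \<Rightarrow> real \<Rightarrow> real \<Rightarrow> real" where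
  "f_w \<mu> w m = w * (1 - (w + m)) + \<mu> * (m - w)"

definition f_m :: "real \<Rightarrow> real \<Rightarrow> real \<Rightarrow> real \<Rightarrow> real \<Rightarrow> real" where
  "f_m r K \<mu> w m = r * m * (1 - (w + m) / K) + \<mu> * (w - m)"

definition assumption1 :: "real \<Rightarrow> real \<Rightarrow> real \<Rightarrow> bool" where
  "assumption1 r K \<mu> \<longleftrightarrow>
     1 < r \<and>
     0 < \<mu> \<and> \<mu> < min (min (r / 2) (1 - 1 / r)) (min (1 - K) K) \<and>
     0 < K \<and> K < min 1 (r / (r - 1) * (1 - \<mu> / (1 - \<mu>)))"

end

theory Submission
  imports Defs
begin

text \<open>Write \<open>s = w + m\<close> for the total population at an interior equilibrium.
  The equation \<open>f_w = 0\<close> reads \<open>w (1 - \<mu> - s) = -\<mu> m < 0\<close>, so \<open>s > 1 - \<mu> > K\<close>;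
  multiplied by \<open>K\<close>, the equation \<open>f_m = 0\<close> reads \<open>r m (s - K) = \<mu> K (s - 2m)\<close>.
  Comparing both sides at \<open>s - K > 0\<close> first gives \<open>2m \<le> K\<close> (using \<open>\<mu> < r/2\<close>) and then
  \<open>r m \<ge> \<mu> K\<close>. Hence \<open>(1 - \<mu> - s)(r m - \<mu> K) \<le> 0\<close>; eliminating \<open>r m s\<close> with the second
  equation turns this product into the linear bound
  \<open>m (r (1 - \<mu> - K) + 2 \<mu> K) \<le> \<mu> K (1 - \<mu>)\<close>.\<close>

lemma f_w_zero_total_gt:
  fixes \<mu> w m :: real
  assumes "f_w \<mu> w m = 0" and "0 < w" "0 < m" "0 < \<mu>"
  shows "1 - \<mu> < w + m"
proof -
  have "w * (1 - \<mu> - (w + m)) = - (\<mu> * m)"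
    using assms(1) unfolding f_w_def by (simp add: algebra_simps)
  moreover have "0 < \<mu> * m" using assms by simp
  ultimately have "w * (1 - \<mu> - (w + m)) < 0" by linarith
  with \<open>0 < w\<close> show ?thesis by (simp add: mult_less_0_iff)
qed

lemma f_m_zero_iff:
  fixes r K \<mu> w m :: real
  assumes "K \<noteq> 0"
  shows "f_m r K \<mu> w m = 0 \<longleftrightarrow> r * m * (w + m - K) = \<mu> * K * (w - m)"
proof -
  have "K * f_m r K \<mu> w m = \<mu> * K * (w - m) - r * m * (w + m - K)"
    unfolding f_m_def using assms by (simp add: field_simps)
  then show ?thesis using assms by auto
qed

lemma mutant_lower_bound:
  fixes r K \<mu> w m :: real
  assumes eq: "r * m * (w + m - K) = \<mu> * K * (w - m)"
    and "K < w + m" "0 < K" "0 < \<mu>" "\<mu> < r / 2"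
  shows "\<mu> * K \<le> r * m"
proof -
  define d where "d = w + m - K"
  have d: "0 < d" using assms(2) by (simp add: d_def)
  have eq': "(r * m - \<mu> * K) * d = \<mu> * K * (K - 2 * m)"
    using eq by (simp add: d_def algebra_simps)
  have "2 * m \<le> K"
  proof (rule ccontr)
    assume "\<not> 2 * m \<le> K"
    then have "\<mu> * K * (K - 2 * m) < 0" using assms by (simp add: mult_pos_neg)
    then have "(r * m - \<mu> * K) * d < 0" using eq' by simp
    then have "r * m < \<mu> * K" using d by (simp add: mult_less_0_iff)
    also have "\<mu> * K < r * (K / 2)" using assms by simp
    finally have "m < K / 2" using assms by simp
    with \<open>\<not> 2 * m \<le> K\<close> show False by simp
  qed
  then have "0 \<le> (r * m - \<mu> * K) * d" using eq' assms by simp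
  with d show ?thesis by (simp add: zero_le_mult_iff)
qed

lemma mutant_linear_bound:
  fixes r K \<mu> w m :: real
  assumes eq: "r * m * (w + m - K) = \<mu> * K * (w - m)"
    and "1 - \<mu> < w + m" "\<mu> * K \<le> r * m"
  shows "m * (r * (1 - \<mu> - K) + 2 * \<mu> * K) \<le> \<mu> * K * (1 - \<mu>)"
proof -
  have "(1 - \<mu> - (w + m)) * (r * m - \<mu> * K) \<le> 0"
    using assms(2,3) by (simp add: mult_nonpos_nonneg)
  then show ?thesis using eq by (simp add: algebra_simps)
qed

theorem mainTheorem20:
  fixes r K \<mu> ws ms :: real
  assumes A1: "assumption1 r K \<mu>"
    and box: "0 < ws" "ws < 1" "0 < ms" "ms < K"
    and eq: "f_w \<mu> ws ms = 0" "f_m r K \<mu> ws ms = 0"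
    and uniq: "\<And>w m. 0 < w \<Longrightarrow> w < 1 \<Longrightarrow> 0 < m \<Longrightarrow> m < K \<Longrightarrow>
                 f_w \<mu> w m = 0 \<Longrightarrow> f_m r K \<mu> w m = 0 \<Longrightarrow> w = ws \<and> m = ms"
  shows "ms \<le> ((\<mu> * K / r) * (1 - \<mu>)) / (1 - \<mu> - K * (1 - 2 * \<mu> / r))"
proof -
  have "1 < r" "0 < \<mu>" "\<mu> < r / 2" "\<mu> < 1 - K" "0 < K"
    using A1 unfolding assumption1_def by auto
  have total: "1 - \<mu> < ws + ms" using f_w_zero_total_gt eq(1) box \<open>0 < \<mu>\<close> by blast
  have eq_m: "r * ms * (ws + ms - K) = \<mu> * K * (ws - ms)"
    using eq(2) f_m_zero_iff \<open>0 < K\<close> by simp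
  have "\<mu> * K \<le> r * ms"
    using mutant_lower_bound[OF eq_m] total \<open>\<mu> < 1 - K\<close> \<open>0 < K\<close> \<open>0 < \<mu>\<close> \<open>\<mu> < r / 2\<close> by simp
  then have bound: "ms * (r * (1 - \<mu> - K) + 2 * \<mu> * K) \<le> \<mu> * K * (1 - \<mu>)"
    using mutant_linear_bound[OF eq_m total] by simp
  have D: "0 < r * (1 - \<mu> - K) + 2 * \<mu> * K"
    using \<open>1 < r\<close> \<open>\<mu> < 1 - K\<close> \<open>0 < \<mu>\<close> \<open>0 < K\<close> by (simp add: add_pos_pos)
  have den: "1 - \<mu> - K * (1 - 2 * \<mu> / r) = (r * (1 - \<mu> - K) + 2 * \<mu> * K) / r"
    using \<open>1 < r\<close> by (simp add: field_simps)
  have "ms \<le> \<mu> * K * (1 - \<mu>) / (r * (1 - \<mu> - K) + 2 * \<mu> * K)"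
    using bound D by (simp add: pos_le_divide_eq)
  also have "\<dots> = ((\<mu> * K / r) * (1 - \<mu>)) / ((r * (1 - \<mu> - K) + 2 * \<mu> * K) / r)"
    using \<open>1 < r\<close> by simp
  finally show ?thesis unfolding den .
qed

end
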